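(* Let $U=(U_{ij})_{i,j=1}^M$, $U_{ij}\in M_M(\mathbb C)$, and $V=(V_{ab})_{a,b=1}^N$, $V_{ab}\in M_N(\mathbb C)$, be projective models, $Q\in M_{M\times N}(\mathbb T)$, $W=U\otimes_QV$ and $W^\circ=U\,{}_Q\!\otimes V$. Then $$\widetilde{W}=\widetilde{U}_{13}\,Q^\delta\,\widetilde{V}_{24},\qquad \widetilde{W^\circ}=\widetilde{V}_{24}\,Q^\delta\,\widetilde{U}_{13},$$ where $Q^\delta=\mathrm{diag}\left(\frac{Q_{ic}Q_{jd}}{Q_{id}Q_{jc}}\right)_{icjd}$ is the diagonal matrix on $\mathbb C^M\otimes\mathbb C^N\otimes\mathbb C^M\otimes\mathbb C^N$ whose entry at the basis vector indexed by $(i,c,j,d)$ is $\frac{Q_{ic}Q_{jd}}{Q_{id}Q_{jc}}$.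
   Context: A square matrix of operators is magic if its entries are orthogonal projections and rows and columns sum to $1$; for $U=(U_{ij})$ with $U_{ij}\in M_n(\mathbb C)$, $(U'_{kl})_{ij}=(U_{ij})_{kl}$, and $U$ is a projective model if $U,U'$ are magic. $(W_{ia,jb})_{kc,ld}=\frac{Q_{ic}Q_{jd}}{Q_{id}Q_{jc}}(U_{ij})_{kl}(V_{ab})_{cd}$ and $(W^\circ_{ia,jb})_{kc,ld}=\frac{Q_{ka}Q_{lb}}{Q_{kb}Q_{la}}(U_{ij})_{kl}(V_{ab})_{cd}$. For such a matrix $U$, $\widetilde U$ is defined by $(\widetilde U_{ij})_{kl}=(U_{jl})_{ik}$, viewed as the element $\sum_{ijkl}(\widetilde U_{ij})_{kl}\,e_{ij}\otimes e_{kl}$ of $M_n(\mathbb C)\otimes M_n(\mathbb C)$. The matrices $\widetilde W,\widetilde{W^\circ}$ (built with $n=MN$) are viewed in $M_M\otimes M_N\otimes M_M\otimes M_N$ via $e_{ia,jb}\otimes e_{kc,ld}=e_{ij}\otimes e_{ab}\otimes e_{kl}\otimes e_{cd}$; $\widetilde U_{13}$ and $\widetilde V_{24}$ are the leg-numbered elements acting on tensor legs $1,3$ and $2,4$ respectively. *)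

theory Defs
  imports Complex_Main
begin

text \<open>A block matrix X = (X_ij) with i,j < m and X_ij in M_n(C) is encoded as
  a function X i j k l = (X_ij)_kl, indices ranging over {0..<m} resp. {0..<n}.\<close>

type_synonym 'a blockmat = "'a \<Rightarrow> 'a \<Rightarrow> 'a \<Rightarrow> 'a \<Rightarrow> complex"

definition orth_proj :: "nat \<Rightarrow> (nat \<Rightarrow> nat \<Rightarrow> complex) \<Rightarrow> bool" where
  "orth_proj n P \<longleftrightarrow>
     (\<forall>k<n. \<forall>l<n. P k l = cnj (P l k)) \<and>
     (\<forall>k<n. \<forall>l<n. (\<Sum>r<n. P k r * P r l) = P k l)"

definition magic :: "nat \<Rightarrow> nat \<Rightarrow> nat blockmat \<Rightarrow> bool" where
  "magic m n X \<longleftrightarrow>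
     (\<forall>i<m. \<forall>j<m. orth_proj n (X i j)) \<and>
     (\<forall>i<m. \<forall>k<n. \<forall>l<n. (\<Sum>j<m. X i j k l) = (if k = l then 1 else 0)) \<and>
     (\<forall>j<m. \<forall>k<n. \<forall>l<n. (\<Sum>i<m. X i j k l) = (if k = l then 1 else 0))"

definition prime_bm :: "'a blockmat \<Rightarrow> 'a blockmat" where
  "prime_bm X = (\<lambda>k l i j. X i j k l)"

definition projective_model :: "nat \<Rightarrow> nat blockmat \<Rightarrow> bool" where
  "projective_model n U \<longleftrightarrow> magic n n U \<and> magic n n (prime_bm U)"

definition qtensor :: "(nat \<Rightarrow> nat \<Rightarrow> complex) \<Rightarrow> nat blockmat \<Rightarrow> nat blockmat \<Rightarrow> (nat \<times> nat) blockmat" where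
  "qtensor Q U V = (\<lambda>(i,a) (j,b) (k,c) (l,d).
     Q i c * Q j d / (Q i d * Q j c) * U i j k l * V a b c d)"

definition qtensor' :: "(nat \<Rightarrow> nat \<Rightarrow> complex) \<Rightarrow> nat blockmat \<Rightarrow> nat blockmat \<Rightarrow> (nat \<times> nat) blockmat" where
  "qtensor' Q U V = (\<lambda>(i,a) (j,b) (k,c) (l,d).
     Q k a * Q l b / (Q k b * Q l a) * U i j k l * V a b c d)"

text \<open>tilde X: coefficients (tilde X i j k l) = (X_jl)_ik of the element
  \<Sum> (tilde X_ij)_kl e_ij \<otimes> e_kl.\<close>

definition tilde :: "'a blockmat \<Rightarrow> 'a blockmat" where
  "tilde X = (\<lambda>i j k l. X j l i k)"

text \<open>Operators on C^M \<otimes> C^N \<otimes> C^M \<otimes> C^N, as matrices indexed by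
  row (i,a,k,c) and column (j,b,l,d) (the coefficient of
  e_ij \<otimes> e_ab \<otimes> e_kl \<otimes> e_cd).\<close>

type_synonym op4 = "(nat \<times> nat \<times> nat \<times> nat) \<Rightarrow> (nat \<times> nat \<times> nat \<times> nat) \<Rightarrow> complex"

definition idx4 :: "nat \<Rightarrow> nat \<Rightarrow> (nat \<times> nat \<times> nat \<times> nat) set" where
  "idx4 M N = {0..<M} \<times> {0..<N} \<times> {0..<M} \<times> {0..<N}"

definition mult4 :: "nat \<Rightarrow> nat \<Rightarrow> op4 \<Rightarrow> op4 \<Rightarrow> op4" where
  "mult4 M N A B = (\<lambda>r s. \<Sum>t\<in>idx4 M N. A r t * B t s)"

text \<open>Identification e_{ia,jb} \<otimes> e_{kc,ld} = e_ij \<otimes> e_ab \<otimes> e_kl \<otimes> e_cd.\<close>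

definition view4 :: "(nat \<times> nat) blockmat \<Rightarrow> op4" where
  "view4 T = (\<lambda>(i,a,k,c) (j,b,l,d). T (i,a) (j,b) (k,c) (l,d))"

definition leg13 :: "nat blockmat \<Rightarrow> op4" where
  "leg13 T = (\<lambda>(i,a,k,c) (j,b,l,d).
     T i j k l * (if a = b then 1 else 0) * (if c = d then 1 else 0))"

definition leg24 :: "nat blockmat \<Rightarrow> op4" where
  "leg24 T = (\<lambda>(i,a,k,c) (j,b,l,d).
     T a b c d * (if i = j then 1 else 0) * (if k = l then 1 else 0))"

definition Qdelta :: "(nat \<Rightarrow> nat \<Rightarrow> complex) \<Rightarrow> op4" where
  "Qdelta Q = (\<lambda>r s. if r = s then
     (case r of (i,c,j,d) \<Rightarrow> Q i c * Q j d / (Q i d * Q j c)) else 0)"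

end

theory Submission
  imports Defs
begin

text \<open>The identities are purely combinatorial: multiplying by the diagonal matrix
  \<open>Q\<^sup>\<delta>\<close> rescales entries, and each leg operator is a Kronecker delta in the legs
  it does not act on, so every entry of the triple product is a single term.\<close>

lemma sum_eq_single_nonzero:
  assumes "finite S" "t0 \<in> S" "\<And>t. t \<in> S \<Longrightarrow> t \<noteq> t0 \<Longrightarrow> f t = 0"
  shows "sum f S = f t0"
  using sum.mono_neutral_right[of S "{t0}" f] assms by auto

lemma finite_idx4: "finite (idx4 M N)"
  by (simp add: idx4_def)

lemma mult4_diagonal_right:
  assumes "t \<in> idx4 M N" and "\<And>x y. x \<noteq> y \<Longrightarrow> D x y = 0"
  shows "mult4 M N A D r t = A r t * D t t"
  unfolding mult4_def
  by (rule sum_eq_single_nonzero[OF finite_idx4 assms(1)]) (simp add: assms(2))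

lemma Qdelta_off_diagonal: "x \<noteq> y \<Longrightarrow> Qdelta Q x y = 0"
  by (simp add: Qdelta_def)

lemma mult4_leg13_diagonal_leg24:
  assumes "(i,a,k,c) \<in> idx4 M N" "(j,b,l,d) \<in> idx4 M N"
    and "\<And>x y. x \<noteq> y \<Longrightarrow> D x y = 0"
  shows "mult4 M N (mult4 M N (leg13 A) D) (leg24 B) (i,a,k,c) (j,b,l,d)
           = A i j k l * D (j,a,l,c) (j,a,l,c) * B a b c d"
proof -
  have mid: "(j,a,l,c) \<in> idx4 M N"
    using assms(1,2) by (auto simp: idx4_def)
  have "mult4 M N (mult4 M N (leg13 A) D) (leg24 B) (i,a,k,c) (j,b,l,d)
      = (\<Sum>t\<in>idx4 M N. leg13 A (i,a,k,c) t * D t t * leg24 B t (j,b,l,d))"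
    unfolding mult4_def[of M N "mult4 M N (leg13 A) D"]
    by (rule sum.cong) (simp_all add: mult4_diagonal_right assms(3))
  also have "\<dots> = leg13 A (i,a,k,c) (j,a,l,c) * D (j,a,l,c) (j,a,l,c) * leg24 B (j,a,l,c) (j,b,l,d)"
    by (rule sum_eq_single_nonzero[OF finite_idx4 mid]) (auto simp: leg13_def leg24_def split: if_splits)
  finally show ?thesis
    by (simp add: leg13_def leg24_def)
qed

lemma mult4_leg24_diagonal_leg13:
  assumes "(i,a,k,c) \<in> idx4 M N" "(j,b,l,d) \<in> idx4 M N"
    and "\<And>x y. x \<noteq> y \<Longrightarrow> D x y = 0"
  shows "mult4 M N (mult4 M N (leg24 B) D) (leg13 A) (i,a,k,c) (j,b,l,d)
           = B a b c d * D (i,b,k,d) (i,b,k,d) * A i j k l"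
proof -
  have mid: "(i,b,k,d) \<in> idx4 M N"
    using assms(1,2) by (auto simp: idx4_def)
  have "mult4 M N (mult4 M N (leg24 B) D) (leg13 A) (i,a,k,c) (j,b,l,d)
      = (\<Sum>t\<in>idx4 M N. leg24 B (i,a,k,c) t * D t t * leg13 A t (j,b,l,d))"
    unfolding mult4_def[of M N "mult4 M N (leg24 B) D"]
    by (rule sum.cong) (simp_all add: mult4_diagonal_right assms(3))
  also have "\<dots> = leg24 B (i,a,k,c) (i,b,k,d) * D (i,b,k,d) (i,b,k,d) * leg13 A (i,b,k,d) (j,b,l,d)"
    by (rule sum_eq_single_nonzero[OF finite_idx4 mid]) (auto simp: leg13_def leg24_def split: if_splits)
  finally show ?thesis
    by (simp add: leg13_def leg24_def)
qed

theorem proposition2p6: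
  fixes M N :: nat
    and U V :: "nat blockmat"
    and Q :: "nat \<Rightarrow> nat \<Rightarrow> complex"
  assumes "projective_model M U"
    and "projective_model N V"
    and "\<forall>i<M. \<forall>a<N. cmod (Q i a) = 1"
  shows "(\<forall>r\<in>idx4 M N. \<forall>s\<in>idx4 M N.
           view4 (tilde (qtensor Q U V)) r s
             = mult4 M N (mult4 M N (leg13 (tilde U)) (Qdelta Q)) (leg24 (tilde V)) r s)
       \<and> (\<forall>r\<in>idx4 M N. \<forall>s\<in>idx4 M N.
           view4 (tilde (qtensor' Q U V)) r s
             = mult4 M N (mult4 M N (leg24 (tilde V)) (Qdelta Q)) (leg13 (tilde U)) r s)"
proof (intro conjI ballI)
  fix r s assume "r \<in> idx4 M N" "s \<in> idx4 M N"
  moreover obtain i a k c j b l d where "r = (i,a,k,c)" "s = (j,b,l,d)"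
    by (cases r, cases s) auto
  ultimately show
    "view4 (tilde (qtensor Q U V)) r s
       = mult4 M N (mult4 M N (leg13 (tilde U)) (Qdelta Q)) (leg24 (tilde V)) r s"
    "view4 (tilde (qtensor' Q U V)) r s
       = mult4 M N (mult4 M N (leg24 (tilde V)) (Qdelta Q)) (leg13 (tilde U)) r s"
    by (simp_all add: mult4_leg13_diagonal_leg24 mult4_leg24_diagonal_leg13 Qdelta_off_diagonal
        view4_def tilde_def qtensor_def qtensor'_def Qdelta_def)
qed

end
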